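(* For all integers $s\geq 2$ and $t\geq 1$, $$(-1)^t\sigma(s,t)=\sum_{i=0}^{s-2}2^{i}\binom{t+i-1}{i}\sigma(s-i,t+i)+(-1)^t2^s\sum_{j=0}^{t-2}(-1)^j\binom{s+j-1}{j}\lambda(s+j)\lambda(t-j)$$ $$\qquad-2^{s-1}\binom{s+t-2}{s-1}\sum_{p\geq 1}\frac{H_p}{(2p+1)^{s+t-1}}-2^s\binom{s+t-2}{s-1}\lambda(s+t-1)\ln 2,$$ where an empty sum equals $0$.
   Context: $H_p=1+\frac12+\cdots+\frac1p$. For integers $t\geq 1$, $n\geq 1$ let $S_n^{(t)}=\sum_{k=1}^{n}\frac{1}{(2k-1)^t}$, and for integers $s\geq 2$, $t\geq 1$ let $\sigma(s,t)=\sum_{n\geq 1}\frac{S_n^{(t)}}{n^s}$. For real $s>1$, $\lambda(s)=\sum_{n\geq 1}\frac{1}{(2n-1)^s}$. *)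

theory Defs
  imports "HOL-Analysis.Analysis"
begin

definition Hn :: "nat \<Rightarrow> real" where
  "Hn p = (\<Sum>k=1..p. 1 / real k)"

definition S_odd :: "nat \<Rightarrow> nat \<Rightarrow> real" where
  "S_odd t n = (\<Sum>k=1..n. 1 / (2 * real k - 1) ^ t)"

definition sigma :: "nat \<Rightarrow> nat \<Rightarrow> real" where
  "sigma s t = (\<Sum>n. S_odd t (n + 1) / (real (n + 1)) ^ s)"

definition lam :: "real \<Rightarrow> real" where
  "lam s = (\<Sum>n. 1 / (2 * real n + 1) powr s)"

end

theory Submission
  imports Defs
begin

text \<open>
  Fix \<open>n\<close> and \<open>q \<le> n\<close>, and put \<open>N = n + 1\<close>, \<open>z = 2q + 1\<close>, \<open>r = 2(n - q) + 1\<close>, so that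
  \<open>2N = z + r\<close>. The partial fraction decomposition of \<open>1 / (x^s y^t)\<close> in powers of \<open>x + y\<close>,
  taken at \<open>x = 2N\<close> and \<open>y = -r\<close>, splits \<open>(-1)^t / (N^s r^t)\<close> into terms with denominators
  \<open>N^(s-i) z^(t+i)\<close>, \<open>r^(t-j) z^(s+j)\<close> and one cross term \<open>N r z^(s+t-2)\<close>.
  Summing over \<open>q \<le> n\<close> and then over \<open>n\<close>, the left side becomes \<open>(-1)^t \<sigma>(s,t)\<close>, the first
  family gives the \<open>\<sigma>(s-i,t+i)\<close>, the second gives the Cauchy products \<open>\<lambda>(s+j) \<lambda>(t-j)\<close>,
  and the cross terms form a double series which, summed over \<open>n\<close> for fixed \<open>q\<close>, is
  \<open>\<Sum>\<^sub>q (2 ln 2 + H\<^sub>q) / (2q + 1)^(s+t-1)\<close>, because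
  \<open>\<Sum>\<^sub>p 1 / ((p + q + 1)(2p + 1)) = (2 ln 2 + H\<^sub>q) / (2q + 1)\<close>.
\<close>

definition partial_fraction_sum :: "'a::field \<Rightarrow> 'a \<Rightarrow> nat \<Rightarrow> nat \<Rightarrow> 'a" where
  "partial_fraction_sum x y s t =
     (\<Sum>i<s. of_nat ((t + i - 1) choose i) / (x ^ (s - i) * (x + y) ^ (t + i)))
   + (\<Sum>j<t. of_nat ((s + j - 1) choose j) / (y ^ (t - j) * (x + y) ^ (s + j)))"

lemma partial_fraction_half_Suc:
  fixes x z :: "'a::field"
  shows "(\<Sum>i<Suc s. of_nat ((t + i) choose i) / (x ^ (Suc s - i) * z ^ (Suc t + i)))
       = ((\<Sum>i<s. of_nat ((t + i) choose i) / (x ^ (s - i) * z ^ (Suc t + i)))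
        + (\<Sum>i<Suc s. of_nat ((t + i - 1) choose i) / (x ^ (Suc s - i) * z ^ (t + i)))) / z"
proof -
  have lhs: "(\<Sum>i<Suc s. of_nat ((t + i) choose i) / (x ^ (Suc s - i) * z ^ (Suc t + i)))
     = 1 / (x ^ Suc s * z ^ Suc t)
       + (\<Sum>i<s. of_nat ((t + i) choose i) / (x ^ (s - i) * z ^ (Suc (Suc t) + i)))
       + (\<Sum>i<s. of_nat ((t + i) choose Suc i) / (x ^ (s - i) * z ^ (Suc (Suc t) + i)))"
    by (subst sum.lessThan_Suc_shift)
       (simp del: sum.lessThan_Suc add: sum.distrib[symmetric] add_divide_distrib[symmetric])
  have rhs: "(\<Sum>i<Suc s. of_nat ((t + i - 1) choose i) / (x ^ (Suc s - i) * z ^ (t + i)))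
     = 1 / (x ^ Suc s * z ^ t)
       + (\<Sum>i<s. of_nat ((t + i) choose Suc i) / (x ^ (s - i) * z ^ (Suc t + i)))"
    by (subst sum.lessThan_Suc_shift) (simp del: sum.lessThan_Suc)
  show ?thesis
    unfolding lhs rhs
    by (simp add: add_divide_distrib sum_divide_distrib mult_ac)
qed

lemma partial_fraction_sum_Suc_Suc:
  "partial_fraction_sum x y (Suc s) (Suc t)
     = (partial_fraction_sum x y s (Suc t) + partial_fraction_sum x y (Suc s) t) / (x + y)"
  using partial_fraction_half_Suc[where x = x and z = "x + y" and s = s and t = t]
    partial_fraction_half_Suc[where x = y and z = "x + y" and s = t and t = s]
  by (simp add: partial_fraction_sum_def add_divide_distrib add_ac)

lemma partial_fraction_sum_0_left: "partial_fraction_sum x y 0 (Suc t) = 1 / y ^ Suc t"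
  unfolding partial_fraction_sum_def
  by (subst sum.lessThan_Suc_shift) (simp del: sum.lessThan_Suc add: binomial_eq_0)

lemma partial_fraction_sum_0_right: "partial_fraction_sum x y (Suc s) 0 = 1 / x ^ Suc s"
  unfolding partial_fraction_sum_def
  by (subst sum.lessThan_Suc_shift) (simp del: sum.lessThan_Suc add: binomial_eq_0)

lemma inverse_monomial_eq_partial_fraction_sum:
  fixes x y :: "'a::field"
  assumes "x \<noteq> 0" "y \<noteq> 0" "x + y \<noteq> 0" "s + t \<ge> 1"
  shows "1 / (x ^ s * y ^ t) = partial_fraction_sum x y s t"
  using assms(4)
proof (induction s arbitrary: t)
  case 0
  then obtain t' where "t = Suc t'" by (cases t) auto
  then show ?case by (simp add: partial_fraction_sum_0_left)
next
  case (Suc s)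
  note IH_s = Suc.IH
  show ?case
  proof (induction t)
    case 0
    then show ?case by (simp add: partial_fraction_sum_0_right)
  next
    case (Suc t)
    have "1 / (x ^ s * y ^ Suc t) + 1 / (x ^ Suc s * y ^ t) = (x + y) / (x ^ Suc s * y ^ Suc t)"
      using assms(1,2) by (simp add: add_divide_distrib)
    then have "1 / (x ^ Suc s * y ^ Suc t) = (1 / (x ^ s * y ^ Suc t) + 1 / (x ^ Suc s * y ^ t)) / (x + y)"
      using assms(3) by simp
    then show ?case
      using Suc.IH IH_s[of "Suc t"] by (simp add: partial_fraction_sum_Suc_Suc)
  qed
qed

lemma partial_fraction_decomposition:
  fixes x y :: "'a::field"
  assumes "x \<noteq> 0" "y \<noteq> 0" "x + y \<noteq> 0" "s \<ge> 1" "t \<ge> 1"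
  shows "1 / (x ^ s * y ^ t)
     = (\<Sum>i<s-1. of_nat ((t + i - 1) choose i) / (x ^ (s - i) * (x + y) ^ (t + i)))
     + (\<Sum>j<t-1. of_nat ((s + j - 1) choose j) / (y ^ (t - j) * (x + y) ^ (s + j)))
     + of_nat ((s + t - 2) choose (s - 1)) / (x * y * (x + y) ^ (s + t - 2))"
proof -
  obtain a where s: "s = Suc a" using assms(4) by (cases s) auto
  obtain b where t: "t = Suc b" using assms(5) by (cases t) auto
  define z where "z = x + y"
  have last_terms: "of_nat ((b + a) choose a) / (x * z ^ Suc (b + a))
      + of_nat ((a + b) choose b) / (y * z ^ Suc (a + b))
      = (of_nat ((a + b) choose a) :: 'a) / (x * y * z ^ (a + b))"
  proof -
    have "(a + b) choose b = (a + b) choose a"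
      using binomial_symmetric[of a "a + b"] by simp
    then have "of_nat ((b + a) choose a) / (x * z ^ Suc (b + a))
        + of_nat ((a + b) choose b) / (y * z ^ Suc (a + b))
        = of_nat ((a + b) choose a) * (1 / x + 1 / y) / z ^ Suc (a + b)"
      by (simp add: add.commute add_divide_distrib distrib_left)
    also have "1 / x + 1 / y = z / (x * y)"
      using assms(1,2) unfolding z_def by (simp add: field_simps)
    finally show ?thesis
      using assms(3) unfolding z_def by simp
  qed
  have "1 / (x ^ s * y ^ t) = partial_fraction_sum x y s t"
    using assms by (intro inverse_monomial_eq_partial_fraction_sum) auto
  then show ?thesis
    using last_terms unfolding partial_fraction_sum_def s t z_def
    by (simp add: add_ac)
qed

lemma divide_minus_power: "c / ((- r) ^ k * y) = (-1) ^ k * c / (r ^ k * y :: 'a::field)"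
  by (cases "even k") (simp_all add: power_minus_odd)

lemma minus_one_power_diff: "j \<le> t \<Longrightarrow> (-1) ^ (t - j) = (-1) ^ t * ((-1) ^ j :: 'a::ring_1)"
  by (simp add: minus_one_power_iff)

text \<open>The case \<open>u = n + 1\<close>, \<open>v = 2(n - q) + 1\<close>, \<open>z = 2q + 1\<close>, with \<open>2^s\<close> cleared.\<close>

lemma partial_fraction_decomposition_double_minus:
  fixes u v :: real
  assumes "u \<noteq> 0" "v \<noteq> 0" "2 * u - v \<noteq> 0" "s \<ge> 1" "t \<ge> 1"
  defines "z \<equiv> 2 * u - v"
  shows "(-1) ^ t / (u ^ s * v ^ t)
     = (\<Sum>i<s-1. 2 ^ i * real ((t + i - 1) choose i) / (u ^ (s - i) * z ^ (t + i)))
     + (-1) ^ t * 2 ^ s * (\<Sum>j<t-1. (-1) ^ j * real ((s + j - 1) choose j) / (v ^ (t - j) * z ^ (s + j)))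
     - 2 ^ (s - 1) * real ((s + t - 2) choose (s - 1)) / (u * v * z ^ (s + t - 2))"
proof -
  have z: "2 * u + - v = z" unfolding z_def by simp
  have decomp: "1 / ((2 * u) ^ s * (- v) ^ t)
     = (\<Sum>i<s-1. real ((t + i - 1) choose i) / ((2 * u) ^ (s - i) * z ^ (t + i)))
     + (\<Sum>j<t-1. real ((s + j - 1) choose j) / ((- v) ^ (t - j) * z ^ (s + j)))
     + real ((s + t - 2) choose (s - 1)) / (2 * u * (- v) * z ^ (s + t - 2))"
    using partial_fraction_decomposition[of "2 * u" "- v" s t] assms unfolding z by simp
  have lhs: "2 ^ s * (1 / ((2 * u) ^ s * (- v) ^ t)) = (-1) ^ t / (u ^ s * v ^ t)"
    using divide_minus_power[of 1 v t "u ^ s"] by (simp add: power_mult_distrib mult.commute)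
  have first: "(\<Sum>i<s-1. 2 ^ s * (real ((t + i - 1) choose i) / ((2 * u) ^ (s - i) * z ^ (t + i))))
      = (\<Sum>i<s-1. 2 ^ i * real ((t + i - 1) choose i) / (u ^ (s - i) * z ^ (t + i)))"
  proof (rule sum.cong)
    fix i assume "i \<in> {..<s-1}"
    then have "(2::real) ^ s = 2 ^ i * 2 ^ (s - i)" by (simp flip: power_add)
    then show "2 ^ s * (real ((t + i - 1) choose i) / ((2 * u) ^ (s - i) * z ^ (t + i)))
        = 2 ^ i * real ((t + i - 1) choose i) / (u ^ (s - i) * z ^ (t + i))"
      by (simp add: power_mult_distrib)
  qed simp
  have second: "(\<Sum>j<t-1. real ((s + j - 1) choose j) / ((- v) ^ (t - j) * z ^ (s + j)))
      = (-1) ^ t * (\<Sum>j<t-1. (-1) ^ j * real ((s + j - 1) choose j) / (v ^ (t - j) * z ^ (s + j)))"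
    unfolding sum_distrib_left
  proof (rule sum.cong)
    fix j assume "j \<in> {..<t-1}"
    then have "j \<le> t" by simp
    then show "real ((s + j - 1) choose j) / ((- v) ^ (t - j) * z ^ (s + j))
        = (-1) ^ t * ((-1) ^ j * real ((s + j - 1) choose j) / (v ^ (t - j) * z ^ (s + j)))"
      unfolding divide_minus_power minus_one_power_diff[OF \<open>j \<le> t\<close>] by simp
  qed simp
  have last: "2 ^ s * (real c / (2 * u * (- v) * z ^ m)) = - (2 ^ (s - 1) * real c / (u * v * z ^ m))" for c m
  proof -
    have "(2::real) ^ s = 2 * 2 ^ (s - 1)" using assms(4) by (simp flip: power_Suc)
    then show ?thesis by simp
  qed
  have "(-1) ^ t / (u ^ s * v ^ t) = 2 ^ s * (1 / ((2 * u) ^ s * (- v) ^ t))"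
    using lhs by simp
  also have "\<dots> = (\<Sum>i<s-1. 2 ^ s * (real ((t + i - 1) choose i) / ((2 * u) ^ (s - i) * z ^ (t + i))))
     + 2 ^ s * (\<Sum>j<t-1. real ((s + j - 1) choose j) / ((- v) ^ (t - j) * z ^ (s + j)))
     + 2 ^ s * (real ((s + t - 2) choose (s - 1)) / (2 * u * (- v) * z ^ (s + t - 2)))"
    by (simp only: decomp distrib_left sum_distrib_left)
  also have "\<dots> = (\<Sum>i<s-1. 2 ^ i * real ((t + i - 1) choose i) / (u ^ (s - i) * z ^ (t + i)))
     + (-1) ^ t * 2 ^ s * (\<Sum>j<t-1. (-1) ^ j * real ((s + j - 1) choose j) / (v ^ (t - j) * z ^ (s + j)))
     - 2 ^ (s - 1) * real ((s + t - 2) choose (s - 1)) / (u * v * z ^ (s + t - 2))"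
    unfolding first second last by (simp add: mult_ac)
  finally show ?thesis .
qed

lemma S_odd_Suc_conv_sum_atMost: "S_odd t (Suc n) = (\<Sum>q\<le>n. 1 / (2 * real q + 1) ^ t)"
proof (induction n)
  case (Suc n)
  have "S_odd t (Suc (Suc n)) = S_odd t (Suc n) + 1 / (2 * real (Suc (Suc n)) - 1) ^ t"
    unfolding S_odd_def by simp
  then show ?case
    using Suc by (simp add: algebra_simps)
qed (simp add: S_odd_def)

lemma S_odd_Suc_conv_sum_atMost_rev: "S_odd t (Suc n) = (\<Sum>q\<le>n. 1 / (2 * real (n - q) + 1) ^ t)"
  unfolding S_odd_Suc_conv_sum_atMost atMost_atLeast0
  by (subst sum.atLeastAtMost_rev) simp

lemma S_odd_div_power_decomposition:
  fixes n :: nat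
  assumes "s \<ge> 1" "t \<ge> 1"
  defines "N \<equiv> real n + 1"
  shows "(-1) ^ t * (S_odd t (Suc n) / N ^ s)
     = (\<Sum>i<s-1. 2 ^ i * real ((t + i - 1) choose i) * (S_odd (t + i) (Suc n) / N ^ (s - i)))
     + (-1) ^ t * 2 ^ s * (\<Sum>j<t-1. (-1) ^ j * real ((s + j - 1) choose j)
          * (\<Sum>q\<le>n. 1 / (2 * real q + 1) ^ (s + j) * (1 / (2 * real (n - q) + 1) ^ (t - j))))
     - 2 ^ (s - 1) * real ((s + t - 2) choose (s - 1))
          * (\<Sum>q\<le>n. 1 / (N * (2 * real (n - q) + 1) * (2 * real q + 1) ^ (s + t - 2)))"
proof -
  define r where "r q = 2 * real (n - q) + 1" for q
  define z where "z q = 2 * real q + 1" for q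
  have "(-1) ^ t / (N ^ s * r q ^ t)
     = (\<Sum>i<s-1. 2 ^ i * real ((t + i - 1) choose i) / (N ^ (s - i) * z q ^ (t + i)))
     + (-1) ^ t * 2 ^ s * (\<Sum>j<t-1. (-1) ^ j * real ((s + j - 1) choose j) / (r q ^ (t - j) * z q ^ (s + j)))
     - 2 ^ (s - 1) * real ((s + t - 2) choose (s - 1)) / (N * r q * z q ^ (s + t - 2))"
    if "q \<le> n" for q
  proof -
    have "2 * N - r q = z q"
      using that unfolding N_def r_def z_def by (simp add: of_nat_diff)
    moreover have "N \<noteq> 0" "r q \<noteq> 0" "z q \<noteq> 0"
      unfolding N_def r_def z_def by (simp_all add: add_nonneg_eq_0_iff)
    ultimately show ?thesis
      using partial_fraction_decomposition_double_minus[of N "r q" s t] assms(1,2) by simp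
  qed
  then have summed: "(\<Sum>q\<le>n. (-1) ^ t / (N ^ s * r q ^ t))
     = (\<Sum>q\<le>n. \<Sum>i<s-1. 2 ^ i * real ((t + i - 1) choose i) / (N ^ (s - i) * z q ^ (t + i)))
     + (-1) ^ t * 2 ^ s * (\<Sum>q\<le>n. \<Sum>j<t-1.
          (-1) ^ j * real ((s + j - 1) choose j) / (r q ^ (t - j) * z q ^ (s + j)))
     - 2 ^ (s - 1) * real ((s + t - 2) choose (s - 1)) * (\<Sum>q\<le>n. 1 / (N * r q * z q ^ (s + t - 2)))"
    by (simp add: sum.distrib sum_subtractf sum_distrib_left)
  have first: "(\<Sum>q\<le>n. (-1) ^ t / (N ^ s * r q ^ t)) = (-1) ^ t * (S_odd t (Suc n) / N ^ s)"
    unfolding S_odd_Suc_conv_sum_atMost_rev r_def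
    by (simp add: sum_distrib_left sum_divide_distrib mult.commute)
  have second: "(\<Sum>q\<le>n. \<Sum>i<s-1. 2 ^ i * real ((t + i - 1) choose i) / (N ^ (s - i) * z q ^ (t + i)))
      = (\<Sum>i<s-1. 2 ^ i * real ((t + i - 1) choose i) * (S_odd (t + i) (Suc n) / N ^ (s - i)))"
    unfolding S_odd_Suc_conv_sum_atMost z_def
    by (subst sum.swap) (simp add: sum_distrib_left sum_divide_distrib mult.commute)
  have third: "(\<Sum>q\<le>n. \<Sum>j<t-1.
          (-1) ^ j * real ((s + j - 1) choose j) / (r q ^ (t - j) * z q ^ (s + j)))
      = (\<Sum>j<t-1. (-1) ^ j * real ((s + j - 1) choose j)
          * (\<Sum>q\<le>n. 1 / z q ^ (s + j) * (1 / r q ^ (t - j))))"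
    by (subst sum.swap) (simp add: sum_distrib_left mult.commute)
  from summed show ?thesis
    unfolding first second third unfolding r_def z_def .
qed

lemma Hn_eq_harm: "Hn n = harm n"
  unfolding Hn_def harm_def by (simp add: inverse_eq_divide)

lemma harm_le_two_sqrt: "harm n \<le> 2 * sqrt (real n)"
proof (induction n)
  case (Suc n)
  define a where "a = sqrt (real n)"
  define b where "b = sqrt (real (Suc n))"
  have "a \<ge> 0" "b \<ge> 1" "a \<le> b" unfolding a_def b_def by simp_all
  have "(b - a) * (b + a) = 1"
    unfolding a_def b_def by (simp add: algebra_simps)
  then have "2 * (b - a) = 2 / (b + a)"
    using \<open>a \<ge> 0\<close> \<open>b \<ge> 1\<close> by (simp add: field_simps)
  also have "\<dots> \<ge> 1 / b"
    using \<open>a \<le> b\<close> \<open>a \<ge> 0\<close> \<open>b \<ge> 1\<close> by (simp add: field_simps)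
  also have "1 / b \<ge> 1 / b ^ 2"
    using \<open>b \<ge> 1\<close> by (simp add: field_simps power2_eq_square)
  finally have "inverse (real (Suc n)) \<le> 2 * b - 2 * a"
    unfolding b_def by (simp add: inverse_eq_divide)
  then show ?case
    using Suc by (simp add: harm_Suc a_def b_def)
qed (simp add: harm_def)

lemma summable_harm_Suc_div_square: "summable (\<lambda>n. harm (Suc n) / (real n + 1) ^ 2 :: real)"
proof (rule summable_comparison_test')
  show "summable (\<lambda>n. 2 * real (Suc n) powr (-3/2))"
    using summable_real_powr_iff[of "-3/2"] by (subst summable_Suc_iff) simp
  fix n :: nat
  have "harm (Suc n) / (real n + 1) ^ 2 \<le> 2 * sqrt (real (Suc n)) / real (Suc n) ^ 2"
    using harm_le_two_sqrt[of "Suc n"] by (simp add: add.commute divide_right_mono)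
  also have "\<dots> = 2 * real (Suc n) powr (-3/2)"
  proof -
    have "sqrt (real (Suc n)) / real (Suc n) ^ 2 = real (Suc n) powr (1/2) / real (Suc n) powr 2"
      by (simp only: powr_half_sqrt of_nat_0_le_iff powr_numeral of_nat_0_less_iff zero_less_Suc)
    also have "\<dots> = real (Suc n) powr (-3/2)"
      by (simp only: powr_diff[symmetric]) simp
    finally show ?thesis by simp
  qed
  finally show "norm (harm (Suc n) / (real n + 1) ^ 2) \<le> 2 * real (Suc n) powr (-3/2)"
    by (simp add: harm_nonneg)
qed

lemma summable_inverse_odd_power: "k \<ge> 2 \<Longrightarrow> summable (\<lambda>n. 1 / (2 * real n + 1) ^ k)"
proof (rule summable_comparison_test'[where N = 1])
  show "k \<ge> 2 \<Longrightarrow> summable (\<lambda>n. inverse (real n ^ k))"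
    by (rule inverse_power_summable)
  fix n :: nat assume "n \<ge> 1"
  then have "real n ^ k \<le> (2 * real n + 1) ^ k"
    by (intro power_mono) auto
  with \<open>n \<ge> 1\<close> show "norm (1 / (2 * real n + 1) ^ k) \<le> inverse (real n ^ k)"
    by (simp add: inverse_eq_divide divide_left_mono)
qed

lemma summable_harm_div_odd_power:
  assumes "k \<ge> 2"
  shows "summable (\<lambda>n. harm n / (2 * real n + 1) ^ k :: real)"
proof (rule summable_comparison_test'[OF summable_harm_Suc_div_square])
  fix n :: nat
  have "(real n + 1) ^ 2 \<le> (2 * real n + 1) ^ 2"
    by (intro power_mono) auto
  also have "\<dots> \<le> (2 * real n + 1) ^ k"
    using assms by (intro power_increasing) auto
  finally have "(real n + 1) ^ 2 \<le> (2 * real n + 1) ^ k" .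
  then have "harm n / (2 * real n + 1) ^ k \<le> harm (Suc n) / (real n + 1) ^ 2"
    using harm_mono[of n "Suc n"] by (intro frac_le) (simp_all add: harm_nonneg)
  then show "norm (harm n / (2 * real n + 1) ^ k) \<le> harm (Suc n) / (real n + 1) ^ 2"
    by (simp add: harm_nonneg)
qed

lemma S_odd_le_harm: "t \<ge> 1 \<Longrightarrow> S_odd t n \<le> harm n"
  unfolding S_odd_def harm_def
proof (rule sum_mono)
  fix k assume "t \<ge> 1" "k \<in> {1..n}"
  then have "real k \<le> 2 * real k - 1" "1 \<le> 2 * real k - 1" by auto
  then have "1 / (2 * real k - 1) ^ t \<le> 1 / (2 * real k - 1)"
    using \<open>t \<ge> 1\<close> by (simp add: divide_left_mono self_le_power)
  also have "\<dots> \<le> inverse (real k)"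
    using \<open>real k \<le> 2 * real k - 1\<close> \<open>k \<in> {1..n}\<close>
    by (simp add: inverse_eq_divide divide_left_mono)
  finally show "1 / (2 * real k - 1) ^ t \<le> inverse (of_nat k)" by simp
qed

lemma summable_S_odd_div_power:
  assumes "s \<ge> 2" "t \<ge> 1"
  shows "summable (\<lambda>n. S_odd t (Suc n) / (real n + 1) ^ s)"
proof (rule summable_comparison_test'[OF summable_harm_Suc_div_square])
  fix n :: nat
  have "(real n + 1) ^ 2 \<le> (real n + 1) ^ s"
    using assms(1) by (intro power_increasing) auto
  moreover have "0 \<le> S_odd t (Suc n)"
    unfolding S_odd_def by (intro sum_nonneg) auto
  ultimately have "S_odd t (Suc n) / (real n + 1) ^ s \<le> harm (Suc n) / (real n + 1) ^ 2"
    using S_odd_le_harm[OF assms(2), of "Suc n"] by (intro frac_le) simp_all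
  with \<open>0 \<le> S_odd t (Suc n)\<close>
  show "norm (S_odd t (Suc n) / (real n + 1) ^ s) \<le> harm (Suc n) / (real n + 1) ^ 2"
    by simp
qed

lemma lam_of_nat: "lam (real k) = (\<Sum>n. 1 / (2 * real n + 1) ^ k)"
  unfolding lam_def by (simp add: powr_realpow)

lemma lam_mult_lam_sums:
  assumes "p \<ge> 2" "m \<ge> 2"
  shows "(\<lambda>n. \<Sum>q\<le>n. 1 / (2 * real q + 1) ^ p * (1 / (2 * real (n - q) + 1) ^ m))
           sums (lam (real p) * lam (real m))"
  unfolding lam_of_nat
  by (rule Cauchy_product_sums) (simp_all add: summable_inverse_odd_power assms)

lemma sums_two_ln2: "(\<lambda>p. 2 / (2 * real p + 1) - 1 / (real p + 1)) sums (2 * ln 2)"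
proof -
  have "2 * (inverse (real (2 * p + 1)) - inverse (real (2 * p + 2))) = 2 / (2 * real p + 1) - 1 / (real p + 1)"
    for p :: nat
    by (simp add: inverse_eq_divide field_split_simps)
  then show ?thesis
    using sums_mult[OF alternating_harmonic_series_sums', of 2] by simp
qed

lemma sums_harm_telescope: "(\<lambda>p. 1 / (real p + 1) - 1 / (real p + real q + 1)) sums harm q"
proof (induction q)
  case (Suc q)
  have "(\<lambda>p. 1 / (real p + real q + 1)) \<longlonglongrightarrow> 0"
    by real_asymp
  from telescope_sums'[OF this]
  have "(\<lambda>p. 1 / (real p + real q + 1) - 1 / (real (Suc p) + real q + 1)) sums (1 / (real q + 1))"
    by simp
  from sums_add[OF Suc this] show ?case
    by (simp add: harm_Suc inverse_eq_divide add_ac)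
qed (simp add: harm_def)

lemma sums_inverse_shifted_product:
  "(\<lambda>p. 1 / ((real (p + q) + 1) * (2 * real p + 1))) sums ((2 * ln 2 + harm q) / (2 * real q + 1))"
proof -
  have "1 / ((real (p + q) + 1) * (2 * real p + 1))
      = ((2 / (2 * real p + 1) - 1 / (real p + 1)) + (1 / (real p + 1) - 1 / (real p + real q + 1)))
        / (2 * real q + 1)" for p
  proof -
    have "2 / (2 * real p + 1) - 1 / (real p + real q + 1)
        = (2 * real q + 1) / ((2 * real p + 1) * (real p + real q + 1))"
      by (simp add: diff_frac_eq)
    moreover have "2 * real q + 1 \<noteq> 0" by (simp add: add_nonneg_eq_0_iff)
    ultimately show ?thesis by (simp add: add.commute)
  qed
  then show ?thesis
    using sums_divide[OF sums_add[OF sums_two_ln2 sums_harm_telescope], where c = "2 * real q + 1"] by simp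
qed

lemma diagonal_sums:
  assumes "w \<ge> 1"
  shows "(\<lambda>n. \<Sum>q\<le>n. 1 / ((real n + 1) * (2 * real (n - q) + 1) * (2 * real q + 1) ^ w))
           sums (\<Sum>q. (2 * ln 2 + harm q) / (2 * real q + 1) ^ (w + 1))"
proof -
  define f :: "nat \<times> nat \<Rightarrow> real"
    where "f = (\<lambda>(q, p). 1 / ((real (p + q) + 1) * (2 * real p + 1) * (2 * real q + 1) ^ w))"
  define g where "g q = (2 * ln 2 + harm q) / (2 * real q + 1) ^ (w + 1)" for q
  have rows: "((\<lambda>p. f (q, p)) has_sum g q) UNIV" for q
  proof (rule sums_nonneg_imp_has_sum)
    show "(\<lambda>p. f (q, p)) sums g q"
      using sums_divide[OF sums_inverse_shifted_product[of q], where c = "(2 * real q + 1) ^ w"]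
      by (simp add: f_def g_def mult_ac)
  qed (simp add: f_def)
  have "summable (\<lambda>q. 2 * ln 2 * (1 / (2 * real q + 1) ^ (w + 1)) + harm q / (2 * real q + 1) ^ (w + 1))"
    using assms
    by (intro summable_add summable_mult summable_inverse_odd_power summable_harm_div_odd_power) simp_all
  then have "summable g"
    unfolding g_def by (simp add: add_divide_distrib)
  then have "(g has_sum (\<Sum>q. g q)) UNIV"
    by (intro sums_nonneg_imp_has_sum summable_sums) (simp_all add: g_def harm_nonneg)
  txt \<open>The nonnegative double series is summed along rows \<open>q\<close> and along diagonals \<open>n = p + q\<close>.\<close>
  then have "(f has_sum (\<Sum>q. g q)) (UNIV \<times> UNIV)"
    using rows by (intro has_sum_SigmaI summable_on_SigmaI has_sum_imp_summable) (auto simp: f_def)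
  then have "((\<lambda>(n, q). f (q, n - q)) has_sum (\<Sum>q. g q)) (SIGMA n:UNIV. {..n})"
    by (subst has_sum_reindex_bij_witness
          [where j = "\<lambda>(n, q). (q, n - q)" and i = "\<lambda>(q, p). (p + q, q)"])
      (auto simp: f_def)
  then have "((\<lambda>n. \<Sum>q\<le>n. f (q, n - q)) has_sum (\<Sum>q. g q)) UNIV"
    by (rule has_sum_Sigma') simp
  then show ?thesis
    unfolding g_def f_def by (auto dest!: has_sum_imp_sums)
qed

lemma suminf_two_ln2_plus_harm_div_odd_power:
  assumes "k \<ge> 2"
  shows "(\<Sum>q. (2 * ln 2 + harm q) / (2 * real q + 1) ^ k)
       = (\<Sum>p. Hn (p + 1) / (2 * real (p + 1) + 1) ^ k) + 2 * ln 2 * lam (real k)"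
proof -
  have harm_part: "summable (\<lambda>q. harm q / (2 * real q + 1) ^ k :: real)"
    using assms by (rule summable_harm_div_odd_power)
  have lam_part: "summable (\<lambda>q. 2 * ln 2 * (1 / (2 * real q + 1) ^ k))"
    using assms by (intro summable_mult summable_inverse_odd_power)
  have "(\<Sum>q. (2 * ln 2 + harm q) / (2 * real q + 1) ^ k)
      = (\<Sum>q. harm q / (2 * real q + 1) ^ k) + (\<Sum>q. 2 * ln 2 * (1 / (2 * real q + 1) ^ k))"
    using suminf_add[OF harm_part lam_part] by (simp add: add_divide_distrib add.commute)
  also have "(\<Sum>q. harm q / (2 * real q + 1) ^ k) = (\<Sum>p. harm (Suc p) / (2 * real (Suc p) + 1) ^ k)"
    using suminf_split_head[OF harm_part] by (simp add: harm_def)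
  also have "(\<Sum>q. 2 * ln 2 * (1 / (2 * real q + 1) ^ k)) = 2 * ln 2 * lam (real k)"
    unfolding lam_of_nat using summable_inverse_odd_power[OF assms] by (rule suminf_mult)
  finally show ?thesis
    by (simp add: Hn_eq_harm)
qed


lemma sigma_sums:
  "s \<ge> 2 \<Longrightarrow> t \<ge> 1 \<Longrightarrow> (\<lambda>n. S_odd t (Suc n) / (real n + 1) ^ s) sums sigma s t"
  unfolding sigma_def using summable_S_odd_div_power[of s t] by (simp add: add.commute summable_sums)

lemma sigma_series_decomposition:
  assumes "s \<ge> 2" "t \<ge> 1"
  shows "(-1) ^ t * sigma s t =
      (\<Sum>i<s-1. 2 ^ i * real ((t + i - 1) choose i) * sigma (s - i) (t + i))
    + (-1) ^ t * 2 ^ s * (\<Sum>j<t-1. (-1) ^ j * real ((s + j - 1) choose j)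
         * (lam (real (s + j)) * lam (real (t - j))))
    - 2 ^ (s - 1) * real ((s + t - 2) choose (s - 1))
         * (\<Sum>q. (2 * ln 2 + harm q) / (2 * real q + 1) ^ (s + t - 1))"
proof -
  have "s \<ge> 1" "s + t - 2 + 1 = s + t - 1"
    using assms by simp_all
  have "(\<lambda>n. (-1) ^ t * (S_odd t (Suc n) / (real n + 1) ^ s)) sums
      ((\<Sum>i<s-1. 2 ^ i * real ((t + i - 1) choose i) * sigma (s - i) (t + i))
     + (-1) ^ t * 2 ^ s * (\<Sum>j<t-1. (-1) ^ j * real ((s + j - 1) choose j)
          * (lam (real (s + j)) * lam (real (t - j))))
     - 2 ^ (s - 1) * real ((s + t - 2) choose (s - 1))
          * (\<Sum>q. (2 * ln 2 + harm q) / (2 * real q + 1) ^ (s + t - 2 + 1)))"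
    unfolding S_odd_div_power_decomposition[OF \<open>s \<ge> 1\<close> assms(2)] using assms
    by (intro sums_diff sums_add sums_mult sums_sum sigma_sums lam_mult_lam_sums diagonal_sums) auto
  moreover have "(\<lambda>n. (-1) ^ t * (S_odd t (Suc n) / (real n + 1) ^ s)) sums ((-1) ^ t * sigma s t)"
    using assms by (intro sums_mult sigma_sums)
  ultimately show ?thesis
    unfolding \<open>s + t - 2 + 1 = s + t - 1\<close> using sums_unique2 by blast
qed

theorem mainTheorem10:
  fixes s t :: nat
  assumes "s \<ge> 2" and "t \<ge> 1"
  shows "(-1) ^ t * sigma s t =
      (\<Sum>i=0..s-2. 2 ^ i * real ((t + i - 1) choose i) * sigma (s - i) (t + i))
    + (-1) ^ t * 2 ^ s * (\<Sum>j\<in>{0..<t-1}. (-1) ^ j * real ((s + j - 1) choose j)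
          * lam (real (s + j)) * lam (real (t - j)))
    - 2 ^ (s - 1) * real ((s + t - 2) choose (s - 1))
          * (\<Sum>p. Hn (p + 1) / (2 * real (p + 1) + 1) ^ (s + t - 1))
    - 2 ^ s * real ((s + t - 2) choose (s - 1)) * lam (real (s + t - 1)) * ln 2"
proof -
  define c where "c = real ((s + t - 2) choose (s - 1))"
  have "{0..s-2} = {..<s-1}" "(2::real) ^ s = 2 * 2 ^ (s - 1)"
    using assms(1) by (auto simp flip: power_Suc)
  then have first_sum: "(\<Sum>i=0..s-2. 2 ^ i * real ((t + i - 1) choose i) * sigma (s - i) (t + i))
      = (\<Sum>i<s-1. 2 ^ i * real ((t + i - 1) choose i) * sigma (s - i) (t + i))"
    and ln2_term: "2 ^ (s - 1) * c * (2 * ln 2 * lam (real (s + t - 1)))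
      = 2 ^ s * c * lam (real (s + t - 1)) * ln 2"
    by (simp_all only: mult_ac)
  have second_sum: "(\<Sum>j\<in>{0..<t-1}. (-1) ^ j * real ((s + j - 1) choose j)
          * lam (real (s + j)) * lam (real (t - j)))
      = (\<Sum>j<t-1. (-1) ^ j * real ((s + j - 1) choose j) * (lam (real (s + j)) * lam (real (t - j))))"
    by (simp only: atLeast0LessThan mult.assoc)
  have diagonal: "(\<Sum>q. (2 * ln 2 + harm q) / (2 * real q + 1) ^ (s + t - 1))
      = (\<Sum>p. Hn (p + 1) / (2 * real (p + 1) + 1) ^ (s + t - 1)) + 2 * ln 2 * lam (real (s + t - 1))"
    using assms by (intro suminf_two_ln2_plus_harm_div_odd_power) simp
  from sigma_series_decomposition[OF assms, folded c_def] show ?thesis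
    unfolding first_sum second_sum diagonal distrib_left ln2_term diff_diff_eq unfolding c_def .
qed

end
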